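(* Let $(E,\mathscr{T},\le)$ be a locally compact $T_2$-preordered Tychonoff space with $G(\le)=\bigcap_{f\in\mathcal{F}}G_f$. Let $\mathcal{I}$ be the family of subsets $\mathcal{H}\subseteq\mathcal{F}$ with $G(\le)=\bigcap_{h\in\mathcal{H}}G_h$ and $i(\mathcal{H})=\mathcal{H}$, and let $\mathcal{S}=\bigcap\mathcal{I}$. If there exists a smallest Hausdorff $T_2$-preorder compactification of $E$ (one dominated by every Hausdorff $T_2$-preorder compactification of $E$), then $G(\le)=\bigcap_{h\in\mathcal{S}}G_h$, $i(\mathcal{S})=\mathcal{S}$, and the smallest compactification is equivalent to the $\mathcal{S}$-compactification.
   Context: $T_2$-preordered: the graph $G(\le)=\{(x,y):x\le y\}$ is closed in $E\times E$. $\mathcal{F}$ is the family of continuous isotone functions $f:E\to[0,1]$; $G_f=\{(x,y):f(x)\le f(y)\}$. $\mathcal{C}$ is the family of continuous functions $E\to[0,1]$ constant outside a compact set. For $\mathcal{H}\subseteq\mathcal{F}$ with $G(\le)=\bigcap_{h\in\mathcal{H}}G_h$, the $\mathcal{H}$-compactification is $c:E\to[0,1]^{\mathcal{H}\cup\mathcal{C}}$, $c(x)=(g(x))_{g\in\mathcal{H}\cup\mathcal{C}}$, with $cE$ the closure of $c(E)$, induced product topology, and preorder $x\le_c y$ iff $x_h\le y_h$ for all $h\in\mathcal{H}$; $i(\mathcal{H})$ is the set of $f\in\mathcal{F}$ such that $f\circ c^{-1}$ extends to a continuous isotone function on $(cE,\le_c)$. A Hausdorff $T_2$-preorder compactification of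 $E$ is a preorder embedding (continuous isotone injective, homeomorphism onto image, isotone inverse on image) $c:E\to cE$ with dense image into a compact Hausdorff space with a closed preorder. $c_2$ dominates $c_1$ if there is a continuous isotone $C:c_2E\to c_1E$ with $C\circ c_2=c_1$; equivalent means each dominates the other. *)

theory Defs
  imports "HOL-Analysis.Analysis"
begin

text \<open>A space E is given by a topology T on the carrier topspace T, with a relation le
  (only its restriction to topspace T matters).\<close>

definition preorder_on_space :: "'a topology \<Rightarrow> ('a \<Rightarrow> 'a \<Rightarrow> bool) \<Rightarrow> bool" where
  "preorder_on_space X le \<longleftrightarrow>
     (\<forall>x\<in>topspace X. le x x) \<and>
     (\<forall>x\<in>topspace X. \<forall>y\<in>topspace X. \<forall>z\<in>topspace X. le x y \<and> le y z \<longrightarrow> le x z)"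

definition graph_of :: "'a topology \<Rightarrow> ('a \<Rightarrow> 'a \<Rightarrow> bool) \<Rightarrow> ('a \<times> 'a) set" where
  "graph_of X le = {(x, y). x \<in> topspace X \<and> y \<in> topspace X \<and> le x y}"

definition T2_preordered :: "'a topology \<Rightarrow> ('a \<Rightarrow> 'a \<Rightarrow> bool) \<Rightarrow> bool" where
  "T2_preordered X le \<longleftrightarrow> closedin (prod_topology X X) (graph_of X le)"

definition graph_fun :: "'a topology \<Rightarrow> ('a \<Rightarrow> real) \<Rightarrow> ('a \<times> 'a) set" where
  "graph_fun X f = {(x, y). x \<in> topspace X \<and> y \<in> topspace X \<and> f x \<le> f y}"

definition isotone_on :: "'a topology \<Rightarrow> ('a \<Rightarrow> 'a \<Rightarrow> bool) \<Rightarrow> ('b \<Rightarrow> 'b \<Rightarrow> bool) \<Rightarrow> ('a \<Rightarrow> 'b) \<Rightarrow> bool" where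
  "isotone_on X le le' f \<longleftrightarrow> (\<forall>x\<in>topspace X. \<forall>y\<in>topspace X. le x y \<longrightarrow> le' (f x) (f y))"

definition Fam :: "'a topology \<Rightarrow> ('a \<Rightarrow> 'a \<Rightarrow> bool) \<Rightarrow> ('a \<Rightarrow> real) set" where
  "Fam X le = {f. f \<in> extensional (topspace X) \<and> continuous_map X (top_of_set {0..1}) f
                  \<and> isotone_on X le (\<le>) f}"

definition Cfam :: "'a topology \<Rightarrow> ('a \<Rightarrow> real) set" where
  "Cfam X = {g. g \<in> extensional (topspace X) \<and> continuous_map X (top_of_set {0..1}) g
                 \<and> (\<exists>K r. compactin X K \<and> (\<forall>x\<in>topspace X - K. g x = r))}"

definition determines :: "'a topology \<Rightarrow> ('a \<Rightarrow> 'a \<Rightarrow> bool) \<Rightarrow> ('a \<Rightarrow> real) set \<Rightarrow> bool" where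
  "determines X le H \<longleftrightarrow> graph_of X le = topspace X \<times> topspace X \<inter> (\<Inter>h\<in>H. graph_fun X h)"

text \<open>The H-compactification: c x = (g x) for g in H \<union> C, into [0,1]^(H \<union> C).\<close>
definition cube :: "'a topology \<Rightarrow> ('a \<Rightarrow> real) set \<Rightarrow> (('a \<Rightarrow> real) \<Rightarrow> real) topology" where
  "cube X H = product_topology (\<lambda>_. top_of_set {0..1}) (H \<union> Cfam X)"

definition Hmap :: "'a topology \<Rightarrow> ('a \<Rightarrow> real) set \<Rightarrow> 'a \<Rightarrow> (('a \<Rightarrow> real) \<Rightarrow> real)" where
  "Hmap X H x = restrict (\<lambda>g. g x) (H \<union> Cfam X)"

definition Htop :: "'a topology \<Rightarrow> ('a \<Rightarrow> real) set \<Rightarrow> (('a \<Rightarrow> real) \<Rightarrow> real) topology" where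
  "Htop X H = subtopology (cube X H) ((cube X H) closure_of (Hmap X H ` topspace X))"

definition Hle :: "('a \<Rightarrow> real) set \<Rightarrow> (('a \<Rightarrow> real) \<Rightarrow> real) \<Rightarrow> (('a \<Rightarrow> real) \<Rightarrow> real) \<Rightarrow> bool" where
  "Hle H p q \<longleftrightarrow> (\<forall>h\<in>H. p h \<le> q h)"

definition iH :: "'a topology \<Rightarrow> ('a \<Rightarrow> 'a \<Rightarrow> bool) \<Rightarrow> ('a \<Rightarrow> real) set \<Rightarrow> ('a \<Rightarrow> real) set" where
  "iH X le H = {f \<in> Fam X le. \<exists>F. continuous_map (Htop X H) (top_of_set {0..1}) F
                    \<and> isotone_on (Htop X H) (Hle H) (\<le>) F
                    \<and> (\<forall>x\<in>topspace X. F (Hmap X H x) = f x)}"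

definition Ifam :: "'a topology \<Rightarrow> ('a \<Rightarrow> 'a \<Rightarrow> bool) \<Rightarrow> ('a \<Rightarrow> real) set set" where
  "Ifam X le = {H. H \<subseteq> Fam X le \<and> determines X le H \<and> iH X le H = H}"

definition is_T2_compactification ::
  "'a topology \<Rightarrow> ('a \<Rightarrow> 'a \<Rightarrow> bool) \<Rightarrow> 'b topology \<Rightarrow> ('b \<Rightarrow> 'b \<Rightarrow> bool) \<Rightarrow> ('a \<Rightarrow> 'b) \<Rightarrow> bool" where
  "is_T2_compactification X le K leK c \<longleftrightarrow>
     compact_space K \<and> Hausdorff_space K \<and> preorder_on_space K leK \<and> T2_preordered K leK \<and>
     continuous_map X K c \<and> embedding_map X K c \<and>
     (\<forall>x\<in>topspace X. \<forall>y\<in>topspace X. le x y \<longleftrightarrow> leK (c x) (c y)) \<and>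
     K closure_of (c ` topspace X) = topspace K"

definition dominates ::
  "'a topology \<Rightarrow> 'b topology \<Rightarrow> ('b \<Rightarrow> 'b \<Rightarrow> bool) \<Rightarrow> ('a \<Rightarrow> 'b) \<Rightarrow>
   'c topology \<Rightarrow> ('c \<Rightarrow> 'c \<Rightarrow> bool) \<Rightarrow> ('a \<Rightarrow> 'c) \<Rightarrow> bool" where
  "dominates X K2 le2 c2 K1 le1 c1 \<longleftrightarrow>
     (\<exists>C. continuous_map K2 K1 C \<and> isotone_on K2 le2 le1 C \<and> (\<forall>x\<in>topspace X. C (c2 x) = c1 x))"

definition equivalent_compactifications ::
  "'a topology \<Rightarrow> 'b topology \<Rightarrow> ('b \<Rightarrow> 'b \<Rightarrow> bool) \<Rightarrow> ('a \<Rightarrow> 'b) \<Rightarrow>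
   'c topology \<Rightarrow> ('c \<Rightarrow> 'c \<Rightarrow> bool) \<Rightarrow> ('a \<Rightarrow> 'c) \<Rightarrow> bool" where
  "equivalent_compactifications X K2 le2 c2 K1 le1 c1 \<longleftrightarrow>
     dominates X K2 le2 c2 K1 le1 c1 \<and> dominates X K1 le1 c1 K2 le2 c2"

end

theory Submission
  imports Defs
begin

text \<open>
  Let S0 be the set of continuous isotone functions E \<rightarrow> [0,1] that extend to continuous isotone
  functions on the smallest compactification K0. Nachbin's ordered Urysohn lemma on the compact
  preordered space K0 shows that S0 determines the preorder, and the extensions assemble into a map
  showing that K0 dominates the S0-compactification; hence i(S0) = S0 and S0 belongs to the family.
  Conversely, for H in the family the H-compactification dominates K0, so every function extending
  to K0 extends to it: S0 \<subseteq> i(H) = H. Thus the intersection of the family is S0, and the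
  S0-compactification and K0 dominate each other.
\<close>

section \<open>Nachbin's separation theorem for compact preordered spaces\<close>

definition downset :: "'a topology \<Rightarrow> ('a \<Rightarrow> 'a \<Rightarrow> bool) \<Rightarrow> 'a set \<Rightarrow> bool" where
  "downset K le A \<longleftrightarrow> (\<forall>x\<in>topspace K. \<forall>y\<in>A. le x y \<longrightarrow> x \<in> A)"

definition upset :: "'a topology \<Rightarrow> ('a \<Rightarrow> 'a \<Rightarrow> bool) \<Rightarrow> 'a set \<Rightarrow> bool" where
  "upset K le A \<longleftrightarrow> (\<forall>x\<in>A. \<forall>y\<in>topspace K. le x y \<longrightarrow> y \<in> A)"

definition down_closure :: "'a topology \<Rightarrow> ('a \<Rightarrow> 'a \<Rightarrow> bool) \<Rightarrow> 'a set \<Rightarrow> 'a set" where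
  "down_closure K le A = {x \<in> topspace K. \<exists>y\<in>A. le x y}"

definition up_closure :: "'a topology \<Rightarrow> ('a \<Rightarrow> 'a \<Rightarrow> bool) \<Rightarrow> 'a set \<Rightarrow> 'a set" where
  "up_closure K le A = {y \<in> topspace K. \<exists>x\<in>A. le x y}"

lemma closedin_up_closure:
  assumes "compact_space K" "Hausdorff_space K" "T2_preordered K le" "closedin K C"
  shows "closedin K (up_closure K le C)"
proof -
  let ?R = "graph_of K le \<inter> (C \<times> topspace K)"
  have "closedin (prod_topology K K) ?R"
    using assms by (simp add: T2_preordered_def closedin_Int closedin_prod_Times_iff)
  then have "compactin (prod_topology K K) ?R"
    using assms(1) by (simp add: closedin_compact_space compact_space_prod_topology)
  then have "compactin K (snd ` ?R)"
    by (rule image_compactin) (rule continuous_map_snd)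
  moreover have "snd ` ?R = up_closure K le C"
    using closedin_subset[OF assms(4)] by (force simp: graph_of_def up_closure_def image_iff)
  ultimately show ?thesis
    using assms(2) compactin_imp_closedin by fastforce
qed

lemma closedin_down_closure:
  assumes "compact_space K" "Hausdorff_space K" "T2_preordered K le" "closedin K C"
  shows "closedin K (down_closure K le C)"
proof -
  let ?R = "graph_of K le \<inter> (topspace K \<times> C)"
  have "closedin (prod_topology K K) ?R"
    using assms by (simp add: T2_preordered_def closedin_Int closedin_prod_Times_iff)
  then have "compactin (prod_topology K K) ?R"
    using assms(1) by (simp add: closedin_compact_space compact_space_prod_topology)
  then have "compactin K (fst ` ?R)"
    by (rule image_compactin) (rule continuous_map_fst)
  moreover have "fst ` ?R = down_closure K le C"
    using closedin_subset[OF assms(4)] by (force simp: graph_of_def down_closure_def image_iff)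
  ultimately show ?thesis
    using assms(2) compactin_imp_closedin by fastforce
qed

lemma downset_down_closure:
  "preorder_on_space K le \<Longrightarrow> A \<subseteq> topspace K \<Longrightarrow> downset K le (down_closure K le A)"
  unfolding preorder_on_space_def downset_def down_closure_def by blast

lemma upset_up_closure:
  "preorder_on_space K le \<Longrightarrow> A \<subseteq> topspace K \<Longrightarrow> upset K le (up_closure K le A)"
  unfolding preorder_on_space_def upset_def up_closure_def by blast

lemma subset_down_closure:
  "preorder_on_space K le \<Longrightarrow> A \<subseteq> topspace K \<Longrightarrow> A \<subseteq> down_closure K le A"
  unfolding preorder_on_space_def down_closure_def by blast

lemma downset_Diff_upset: "upset K le B \<Longrightarrow> downset K le (topspace K - B)"
  unfolding downset_def upset_def by blast

lemma downset_interpolation: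
  assumes "compact_space K" "Hausdorff_space K" "T2_preordered K le" "preorder_on_space K le"
    and "closedin K A" "downset K le A" "openin K V" "A \<subseteq> V"
  obtains U where "openin K U" "downset K le U" "A \<subseteq> U" "K closure_of U \<subseteq> V"
proof -
  have "normal_space K"
    using assms(1,2) compact_Hausdorff_or_regular_imp_normal_space by blast
  then obtain U0 where U0: "openin K U0" "A \<subseteq> U0" "K closure_of U0 \<subseteq> V"
    using assms(5,7,8) normal_space_alt by meson
  \<comment> \<open>The largest downset inside U0; open because up-closures of closed sets are closed.\<close>
  define U where "U = topspace K - up_closure K le (topspace K - U0)"
  have trans: "le x z" if "x \<in> topspace K" "y \<in> topspace K" "z \<in> topspace K"
    "le x y" "le y z" for x y z
    using assms(4) that unfolding preorder_on_space_def by blast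
  show thesis
  proof
    show "openin K U"
      unfolding U_def using assms(1-3) U0(1) by (intro openin_diff closedin_up_closure) auto
    show "downset K le U"
      unfolding downset_def U_def up_closure_def by (auto dest: trans)
    show "A \<subseteq> U"
    proof
      fix x assume x: "x \<in> A"
      then have "y \<in> U0" if "y \<in> topspace K" "le y x" for y
        using assms(6) U0(2) that unfolding downset_def by blast
      then show "x \<in> U"
        using x closedin_subset[OF assms(5)] unfolding U_def up_closure_def by auto
    qed
    have "U \<subseteq> U0"
      using assms(4) unfolding U_def up_closure_def preorder_on_space_def by auto
    then show "K closure_of U \<subseteq> V"
      using U0(3) closure_of_mono by blast
  qed
qed

lemma closure_downset_interpolation:
  assumes K: "compact_space K" "Hausdorff_space K" "T2_preordered K le" "preorder_on_space K le"
    and "openin K V" "downset K le V" "K closure_of U \<subseteq> V"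
  obtains W where "openin K W" "downset K le W" "K closure_of U \<subseteq> W" "K closure_of W \<subseteq> V"
proof -
  \<comment> \<open>Interpolating above the downset generated by the closure, rather than the closure itself,
    keeps the interpolant a downset.\<close>
  let ?A = "down_closure K le (K closure_of U)"
  have "closedin K ?A" "downset K le ?A"
    using K by (simp_all add: closedin_down_closure downset_down_closure closure_of_subset_topspace)
  moreover have "?A \<subseteq> V"
    using assms(6,7) unfolding down_closure_def downset_def by blast
  ultimately obtain W where "openin K W" "downset K le W" "?A \<subseteq> W" "K closure_of W \<subseteq> V"
    using downset_interpolation[OF K _ _ assms(5)] by blast
  moreover have "K closure_of U \<subseteq> ?A"
    using K(4) by (simp add: subset_down_closure closure_of_subset_topspace)
  ultimately show thesis
    using that by blast
qed

lemma dyadics_between: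
  fixes a b :: real
  assumes "a < b" "0 < b"
  obtains r where "r \<in> dyadics" "a < r" "r < b"
proof -
  obtain n q s where "real q / 2^n < b" "b < real s / 2^n" "\<bar>real q / 2^n - real s / 2^n\<bar> < b - a"
    by (rule padic_rational_approximation_straddle_pos[of "b - a" 2 b]) (use assms in auto)
  then show thesis
    by (intro that[of "real q / 2^n"]) (auto simp: dyadics_def)
qed

definition dyadic_scale :: "'a topology \<Rightarrow> (real \<Rightarrow> 'a set) \<Rightarrow> bool" where
  "dyadic_scale K G \<longleftrightarrow> (\<forall>r \<in> dyadics \<inter> {0..1}. \<forall>s \<in> dyadics \<inter> {0..1}.
      r < s \<longrightarrow> openin K (G r) \<and> K closure_of G r \<subseteq> G s)"

definition scale_function :: "(real \<Rightarrow> 'a set) \<Rightarrow> 'a \<Rightarrow> real" where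
  "scale_function G x = Inf (insert 1 {r \<in> dyadics \<inter> {0..1}. x \<in> G r})"

lemma one_in_dyadics: "1 \<in> dyadics \<inter> {0..1::real}"
  and zero_in_dyadics: "0 \<in> dyadics \<inter> {0..1::real}"
  by (force simp: dyadics_def)+

lemma dyadic_scaleD:
  "\<lbrakk>dyadic_scale K G; r \<in> dyadics \<inter> {0..1}; s \<in> dyadics \<inter> {0..1}; r < s\<rbrakk>
     \<Longrightarrow> openin K (G r) \<and> K closure_of G r \<subseteq> G s"
  unfolding dyadic_scale_def by blast

lemma dyadic_scale_subset_closure:
  assumes "dyadic_scale K G" "r \<in> dyadics \<inter> {0..1}" "r < 1"
  shows "G r \<subseteq> K closure_of G r"
  using closure_of_subset[OF openin_subset[OF conjunct1[OF dyadic_scaleD[OF assms(1,2) one_in_dyadics assms(3)]]]] .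

lemma scale_function_range: "scale_function G x \<in> {0..1}"
proof -
  have "bdd_below (insert 1 {r \<in> dyadics \<inter> {0..1}. x \<in> G r})"
    by (rule bdd_belowI[of _ 0]) auto
  then show ?thesis
    unfolding scale_function_def by (auto intro: cInf_greatest cInf_lower)
qed

lemma scale_function_le:
  assumes "r \<in> dyadics \<inter> {0..1}" "x \<in> G r"
  shows "scale_function G x \<le> r"
proof -
  have "bdd_below (insert 1 {r \<in> dyadics \<inter> {0..1}. x \<in> G r})"
    by (rule bdd_belowI[of _ 0]) auto
  then show ?thesis
    unfolding scale_function_def using assms by (auto intro: cInf_lower)
qed

lemma scale_function_less_iff:
  "scale_function G x < a \<longleftrightarrow> 1 < a \<or> (\<exists>r\<in>dyadics \<inter> {0..1}. x \<in> G r \<and> r < a)"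
  unfolding scale_function_def by (subst cInf_less_iff) (auto intro: bdd_belowI[of _ 0])

lemma scale_function_le_iff:
  assumes scale: "dyadic_scale K G" and a: "0 \<le> a" "a < 1"
  shows "scale_function G x \<le> a \<longleftrightarrow>
           (\<forall>r \<in> dyadics \<inter> {0..1}. a < r \<and> r < 1 \<longrightarrow> x \<in> K closure_of G r)"
    (is "_ \<longleftrightarrow> (\<forall>r \<in> ?D. ?P r)")
proof
  assume le: "scale_function G x \<le> a"
  show "\<forall>r \<in> ?D. ?P r"
  proof (intro ballI impI)
    fix r assume r: "r \<in> ?D" "a < r \<and> r < 1"
    then have "scale_function G x < r"
      using le by simp
    then obtain s where "s \<in> ?D" "x \<in> G s" "s < r"
      using r by (auto simp: scale_function_less_iff)
    then have "x \<in> G r"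
      using dyadic_scaleD[OF scale _ r(1)] dyadic_scale_subset_closure[OF scale] r by force
    then show "x \<in> K closure_of G r"
      using dyadic_scale_subset_closure[OF scale r(1)] r(2) by blast
  qed
next
  assume closure: "\<forall>r \<in> ?D. ?P r"
  have between: "\<exists>r \<in> ?D. a < r \<and> r < b" if "b \<le> 1" "a < b" for b
    using a that dyadics_between[of a b] by (smt (verit) Int_iff atLeastAtMost_iff)
  show "scale_function G x \<le> a"
  proof (rule dense_ge)
    fix b assume "a < b"
    show "scale_function G x \<le> b"
    proof (cases "1 \<le> b")
      case True
      then show ?thesis
        using scale_function_range[of G x] by auto
    next
      case False
      then obtain s where s: "s \<in> ?D" "a < s" "s < b"
        using between[of b] \<open>a < b\<close> by (auto simp: not_le)
      then obtain r where r: "r \<in> ?D" "a < r" "r < s"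
        using between[of s] by auto
      then have "x \<in> G s"
        using closure dyadic_scaleD[OF scale r(1) s(1) r(3)] s False by auto
      then have "scale_function G x < b"
        using s by (auto simp: scale_function_less_iff)
      then show ?thesis
        by simp
    qed
  qed
qed

lemma openin_scale_function_less:
  assumes scale: "dyadic_scale K G"
  shows "openin K {x \<in> topspace K. scale_function G x < a}"
proof (cases "1 < a")
  case True
  then show ?thesis
    by (simp add: scale_function_less_iff)
next
  case False
  let ?D = "dyadics \<inter> {0..1::real}"
  have "openin K (G r)" if "r \<in> ?D" "r < a" for r
    using dyadic_scaleD[OF scale that(1) one_in_dyadics] that(2) False by simp
  moreover have "{x \<in> topspace K. scale_function G x < a} = (\<Union>r \<in> {r \<in> ?D. r < a}. G r)"
    using False openin_subset[OF calculation] by (auto simp: scale_function_less_iff)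
  ultimately show ?thesis
    by auto
qed

lemma closedin_scale_function_le:
  assumes scale: "dyadic_scale K G"
  shows "closedin K {x \<in> topspace K. scale_function G x \<le> a}"
proof (cases "a < 0 \<or> 1 \<le> a")
  case True
  then have "{x \<in> topspace K. scale_function G x \<le> a} = (if a < 0 then {} else topspace K)"
    using scale_function_range[of G] by (auto intro: order_trans) (meson atLeastAtMost_iff not_le order_less_le_trans)
  then show ?thesis
    by simp
next
  case False
  let ?R = "{r \<in> dyadics \<inter> {0..1}. a < r \<and> r < 1}"
  have "{x \<in> topspace K. scale_function G x \<le> a} = \<Inter>(insert (topspace K) ((\<lambda>r. K closure_of G r) ` ?R))"
    using scale_function_le_iff[OF scale] False by auto
  moreover have "closedin K (\<Inter>(insert (topspace K) ((\<lambda>r. K closure_of G r) ` ?R)))"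
    by (intro closedin_Inter) auto
  ultimately show ?thesis
    by simp
qed

lemma continuous_map_scale_function:
  "dyadic_scale K G \<Longrightarrow> continuous_map K (top_of_set {0..1}) (scale_function G)"
  unfolding continuous_map_upper_lower_semicontinuous_lte_gen
  using scale_function_range[of G]
  by (simp add: openin_scale_function_less closedin_scale_function_le del: atLeastAtMost_iff)

lemma isotone_scale_function:
  assumes "\<And>r. r \<in> dyadics \<inter> {0..1} \<Longrightarrow> downset K le (G r)"
  shows "isotone_on K le (\<le>) (scale_function G)"
  unfolding isotone_on_def scale_function_def
proof (intro ballI impI cInf_superset_mono)
  fix x y assume "x \<in> topspace K" "y \<in> topspace K" "le x y"
  then show "insert 1 {r \<in> dyadics \<inter> {0..1}. y \<in> G r} \<subseteq> insert 1 {r \<in> dyadics \<inter> {0..1}. x \<in> G r}"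
    using assms unfolding downset_def by blast
qed (auto intro: bdd_belowI[of _ 0])

lemma downset_dyadic_scale:
  assumes K: "compact_space K" "Hausdorff_space K" "T2_preordered K le" "preorder_on_space K le"
    and S: "closedin K S" "downset K le S" and T: "closedin K T" "upset K le T" and "disjnt S T"
  obtains G :: "real \<Rightarrow> 'a set"
  where "dyadic_scale K G" "\<And>r. r \<in> dyadics \<inter> {0..1} \<Longrightarrow> downset K le (G r)"
    "S \<subseteq> G 0" "G 1 = topspace K - T"
proof -
  define R where "R U V \<longleftrightarrow> openin K U \<and> downset K le U \<and> openin K V \<and> downset K le V
                              \<and> K closure_of U \<subseteq> V" for U V
  have interpolate: "\<exists>W. R U W \<and> R W V" if UV: "R U V" for U V
  proof -
    have "openin K V" "downset K le V" "K closure_of U \<subseteq> V"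
      using UV unfolding R_def by blast+
    then obtain W where "openin K W" "downset K le W" "K closure_of U \<subseteq> W" "K closure_of W \<subseteq> V"
      by (rule closure_downset_interpolation[OF K])
    then show ?thesis
      using UV unfolding R_def by blast
  qed
  have trans: "R U W" if "R U V" "R V W" for U V W
    using that unfolding R_def by (meson closure_of_subset openin_subset subset_trans)
  have complement_T: "openin K (topspace K - T)" "downset K le (topspace K - T)"
    using T by (auto simp: downset_Diff_upset)
  moreover have "S \<subseteq> topspace K - T"
    using closedin_subset[OF S(1)] \<open>disjnt S T\<close> by (auto simp: disjnt_def)
  ultimately obtain U where U: "openin K U" "downset K le U" "S \<subseteq> U" "K closure_of U \<subseteq> topspace K - T"
    using downset_interpolation[OF K S] by blast
  then have "R U (topspace K - T)"
    unfolding R_def using complement_T by (intro conjI)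
  then have "\<exists>G :: real \<Rightarrow> 'a set. G 0 = U \<and> G 1 = topspace K - T \<and>
      (\<forall>r \<in> dyadics \<inter> {0..1}. \<forall>s \<in> dyadics \<inter> {0..1}. r < s \<longrightarrow> R (G r) (G s))"
    by (rule recursion_on_dyadic_fractions[of R, OF _ interpolate trans])
  then obtain G :: "real \<Rightarrow> 'a set" where G0: "G 0 = U" and G1: "G 1 = topspace K - T"
    and G: "\<And>r s. \<lbrakk>r \<in> dyadics \<inter> {0..1}; s \<in> dyadics \<inter> {0..1}; r < s\<rbrakk> \<Longrightarrow> R (G r) (G s)"
    by (elim exE conjE) blast
  show thesis
  proof (rule that[of G])
    show "dyadic_scale K G"
      unfolding dyadic_scale_def R_def[symmetric] using G by (auto simp: R_def)
    show "downset K le (G r)" if "r \<in> dyadics \<inter> {0..1}" for r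
      using G[OF that one_in_dyadics] G1 complement_T that unfolding R_def
      by (cases "r = 1") auto
  qed (use G0 G1 U in auto)
qed

lemma ordered_Urysohn_lemma:
  assumes K: "compact_space K" "Hausdorff_space K" "T2_preordered K le" "preorder_on_space K le"
    and S: "closedin K S" "downset K le S" and T: "closedin K T" "upset K le T" and "disjnt S T"
  obtains f :: "'a \<Rightarrow> real" where "continuous_map K (top_of_set {0..1}) f" "isotone_on K le (\<le>) f"
    "f ` S \<subseteq> {0}" "f ` T \<subseteq> {1}"
proof -
  obtain G where G: "dyadic_scale K G" "\<And>r. r \<in> dyadics \<inter> {0..1} \<Longrightarrow> downset K le (G r)"
    "S \<subseteq> G 0" "G 1 = topspace K - T"
    using downset_dyadic_scale[OF assms] by blast
  show thesis
  proof (rule that[of "scale_function G"])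
    show "continuous_map K (top_of_set {0..1}) (scale_function G)"
      by (rule continuous_map_scale_function[OF G(1)])
    show "isotone_on K le (\<le>) (scale_function G)"
      by (rule isotone_scale_function[OF G(2)])
    have "scale_function G x = 0" if "x \<in> S" for x
      using scale_function_le[OF zero_in_dyadics, of x G] scale_function_range[of G x] G(3) that
      by auto
    then show "scale_function G ` S \<subseteq> {0}"
      by blast
    have "scale_function G x = 1" if "x \<in> T" for x
    proof -
      have "x \<notin> G r" if "r \<in> dyadics \<inter> {0..1}" "r < 1" for r
        using dyadic_scaleD[OF G(1) that(1) one_in_dyadics that(2)] dyadic_scale_subset_closure[OF G(1) that]
          \<open>x \<in> T\<close> G(4) by blast
      then have "\<not> scale_function G x < 1"
        by (auto simp: scale_function_less_iff)
      then show ?thesis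
        using scale_function_range[of G x] by auto
    qed
    then show "scale_function G ` T \<subseteq> {1}"
      by blast
  qed
qed

lemma Nachbin_separation:
  assumes K: "compact_space K" "Hausdorff_space K" "T2_preordered K le" "preorder_on_space K le"
    and "p \<in> topspace K" "q \<in> topspace K" "\<not> le p q"
  obtains f :: "'a \<Rightarrow> real" where "continuous_map K (top_of_set {0..1}) f" "isotone_on K le (\<le>) f"
    "f q = 0" "f p = 1"
proof -
  let ?S = "down_closure K le {q}" and ?T = "up_closure K le {p}"
  have "closedin K ?S" "downset K le ?S" "closedin K ?T" "upset K le ?T"
    using assms by (simp_all add: closedin_down_closure closedin_up_closure closedin_Hausdorff_singleton
        downset_down_closure upset_up_closure)
  moreover have "disjnt ?S ?T"
    using assms unfolding preorder_on_space_def down_closure_def up_closure_def disjnt_def by blast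
  ultimately obtain f :: "'a \<Rightarrow> real" where "continuous_map K (top_of_set {0..1}) f" "isotone_on K le (\<le>) f"
    "f ` ?S \<subseteq> {0}" "f ` ?T \<subseteq> {1}"
    by (rule ordered_Urysohn_lemma[OF K])
  moreover have "q \<in> ?S" "p \<in> ?T"
    using assms unfolding preorder_on_space_def down_closure_def up_closure_def by blast+
  ultimately show thesis
    using that by blast
qed

section \<open>The H-compactification\<close>

lemma Cfam_separation:
  assumes "locally_compact_space X" "completely_regular_space X" "openin X U" "x \<in> U"
  obtains g where "g \<in> Cfam X" "g x = 0" "\<And>y. y \<in> topspace X - U \<Longrightarrow> g y = 1"
proof -
  have nb: "neighbourhood_base_of (\<lambda>V. openin X V \<and> compactin X (X closure_of V)) X"
    using completely_regular_imp_regular_space[OF assms(2)]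
    by (intro locally_compact_space_neighbourhood_base_open_closure_of[THEN iffD1, OF _ assms(1)]) simp
  obtain W V where "openin X W" "x \<in> W" "W \<subseteq> V"
    and V: "openin X V" "compactin X (X closure_of V)" "V \<subseteq> U"
    using neighbourhood_base_of[THEN iffD1, OF nb, rule_format, OF conjI[OF assms(3,4)]] by auto
  then have "x \<in> V"
    by blast
  have "closedin X (topspace X - V)" "compactin X {x}" "disjnt (topspace X - V) {x}"
    using V(1) \<open>x \<in> V\<close> openin_subset by (auto simp: disjnt_def)
  then obtain f :: "'a \<Rightarrow> real"
    where f: "continuous_map X (top_of_set {0..1}) f" "f ` {x} \<subseteq> {0}" "f ` (topspace X - V) \<subseteq> {1}"
    by (rule Urysohn_completely_regular_closed_compact[OF zero_le_one assms(2)])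
  show thesis
  proof
    let ?g = "restrict f (topspace X)"
    have "continuous_map X (top_of_set {0..1}) ?g"
      using f(1) by (rule continuous_map_eq) simp
    moreover have "\<forall>y \<in> topspace X - X closure_of V. ?g y = 1"
      using f(3) closure_of_subset[OF openin_subset[OF V(1)]] by auto
    ultimately show "?g \<in> Cfam X"
      unfolding Cfam_def using V(2) by blast
    show "?g x = 0"
      using f(2) \<open>x \<in> V\<close> V(1) openin_subset by auto
    show "?g y = 1" if "y \<in> topspace X - U" for y
      using f(3) V(3) that by auto
  qed
qed

lemma Hmap_apply: "g \<in> H \<union> Cfam X \<Longrightarrow> Hmap X H x g = g x"
  by (simp add: Hmap_def)

lemma continuous_map_cube_proj:
  "h \<in> H \<union> Cfam X \<Longrightarrow> continuous_map (cube X H) (top_of_set {0..1}) (\<lambda>p. p h)"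
  unfolding cube_def by (rule continuous_map_product_projection)

lemma continuous_map_Htop_proj:
  "h \<in> H \<union> Cfam X \<Longrightarrow> continuous_map (Htop X H) (top_of_set {0..1}) (\<lambda>p. p h)"
  unfolding Htop_def by (rule continuous_map_from_subtopology) (rule continuous_map_cube_proj)

lemma continuous_map_Hmap_cube:
  assumes "H \<subseteq> Fam X le"
  shows "continuous_map X (cube X H) (Hmap X H)"
  unfolding cube_def continuous_map_componentwise
proof
  show "Hmap X H ` topspace X \<subseteq> extensional (H \<union> Cfam X)"
    by (auto simp: Hmap_def)
  show "\<forall>g\<in>H \<union> Cfam X. continuous_map X (top_of_set {0..1}) (\<lambda>x. Hmap X H x g)"
    using assms by (auto simp: Hmap_apply Fam_def Cfam_def)
qed

lemma topspace_Htop: "topspace (Htop X H) = cube X H closure_of (Hmap X H ` topspace X)"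
  by (simp add: Htop_def closure_of_subset_topspace inf.absorb2)

lemma continuous_map_Hmap:
  assumes "H \<subseteq> Fam X le"
  shows "continuous_map X (Htop X H) (Hmap X H)"
proof -
  have "Hmap X H ` topspace X \<subseteq> topspace (cube X H)"
    by (rule continuous_map_image_subset_topspace[OF continuous_map_Hmap_cube[OF assms]])
  then show ?thesis
    using closure_of_subset continuous_map_Hmap_cube[OF assms]
    by (fastforce simp: Htop_def continuous_map_in_subtopology)
qed

lemma compact_space_Htop: "compact_space (Htop X H)"
proof -
  have "compact_space (cube X H)"
    unfolding cube_def compact_space_product_topology by (simp add: compact_space_subtopology)
  then show ?thesis
    unfolding Htop_def by (intro compact_space_subtopology closedin_compact_space) auto
qed

lemma Hausdorff_space_Htop: "Hausdorff_space (Htop X H)"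
  unfolding Htop_def cube_def
  by (intro Hausdorff_space_subtopology) (simp add: Hausdorff_space_product_topology Hausdorff_space_subtopology)

lemma preorder_on_space_Htop: "preorder_on_space (Htop X H) (Hle H)"
  unfolding preorder_on_space_def Hle_def by (meson order_refl order_trans)

lemma T2_preordered_Htop: "T2_preordered (Htop X H) (Hle H)"
proof -
  let ?P = "prod_topology (Htop X H) (Htop X H)"
  let ?C = "\<lambda>h. {z \<in> topspace ?P. fst z h - snd z h \<in> {..0}}"
  have closed_C: "closedin ?P (?C h)" if "h \<in> H" for h
  proof (rule closedin_continuous_map_preimage)
    have "continuous_map (Htop X H) euclideanreal (\<lambda>p. p h)"
      using continuous_map_Htop_proj[of h H X] that by (simp add: continuous_map_in_subtopology)
    then show "continuous_map ?P euclideanreal (\<lambda>z. fst z h - snd z h)"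
      by (intro continuous_map_diff continuous_map_compose[OF continuous_map_fst, unfolded o_def]
          continuous_map_compose[OF continuous_map_snd, unfolded o_def])
  qed simp
  have "graph_of (Htop X H) (Hle H) = \<Inter>(insert (topspace ?P) (?C ` H))"
    by (auto simp: graph_of_def Hle_def)
  moreover have "closedin ?P (\<Inter>(insert (topspace ?P) (?C ` H)))"
    using closed_C by (intro closedin_Inter) (auto simp del: topspace_prod_topology)
  ultimately show ?thesis
    unfolding T2_preordered_def by (simp only:)
qed

lemma dense_Hmap: "Htop X H closure_of (Hmap X H ` topspace X) = topspace (Htop X H)"
proof -
  let ?S = "Hmap X H ` topspace X" and ?C = "cube X H closure_of (Hmap X H ` topspace X)"
  have "topspace (cube X H) \<inter> ?S \<subseteq> ?C \<inter> ?S"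
    using closure_of_subset_Int[of "cube X H" ?S] by blast
  then have "?C \<subseteq> cube X H closure_of (?C \<inter> ?S)"
    using closure_of_mono closure_of_restrict[of "cube X H" ?S] by metis
  moreover have "cube X H closure_of (?C \<inter> ?S) \<subseteq> ?C"
    by (simp add: closure_of_mono)
  ultimately show ?thesis
    unfolding topspace_Htop by (auto simp: Htop_def closure_of_subtopology)
qed

lemma Hle_Hmap_iff:
  assumes "determines X le H" "x \<in> topspace X" "y \<in> topspace X"
  shows "le x y \<longleftrightarrow> Hle H (Hmap X H x) (Hmap X H y)"
proof -
  have "le x y \<longleftrightarrow> (x, y) \<in> graph_of X le"
    using assms(2,3) by (simp add: graph_of_def)
  also have "\<dots> \<longleftrightarrow> (x, y) \<in> topspace X \<times> topspace X \<inter> (\<Inter>h\<in>H. graph_fun X h)"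
    using assms(1) by (simp add: determines_def)
  also have "\<dots> \<longleftrightarrow> Hle H (Hmap X H x) (Hmap X H y)"
    using assms(2,3) by (simp add: graph_fun_def Hle_def Hmap_def)
  finally show ?thesis .
qed

lemma inj_on_Hmap:
  assumes LC: "locally_compact_space X" and CR: "completely_regular_space X" and HT: "Hausdorff_space X"
  shows "inj_on (Hmap X H) (topspace X)"
proof (rule inj_onI, rule ccontr)
  fix x y assume x: "x \<in> topspace X" and y: "y \<in> topspace X"
    and eq: "Hmap X H x = Hmap X H y" and "x \<noteq> y"
  then have "openin X (topspace X - {y})" "x \<in> topspace X - {y}"
    using HT by (auto intro: closedin_Hausdorff_singleton)
  then obtain g where "g \<in> Cfam X" "g x = 0" "g y = 1"
    using y by (elim Cfam_separation[OF LC CR]) auto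
  then show False
    using eq by (metis Hmap_apply UnI2 zero_neq_one)
qed

lemma open_map_Hmap:
  assumes LC: "locally_compact_space X" and CR: "completely_regular_space X" and H: "H \<subseteq> Fam X le"
  shows "open_map X (subtopology (cube X H) (Hmap X H ` topspace X)) (Hmap X H)"
  unfolding open_map_def
proof (intro allI impI)
  let ?f = "Hmap X H" and ?E = "topspace X"
  let ?Y = "subtopology (cube X H) (?f ` ?E)"
  fix U assume U: "openin X U"
  show "openin ?Y (?f ` U)"
    unfolding openin_subopen[of ?Y "?f ` U"]
  proof
    fix p assume "p \<in> ?f ` U"
    then obtain x where x: "x \<in> U" "p = ?f x"
      by blast
    obtain g where g: "g \<in> Cfam X" "g x = 0" "\<And>y. y \<in> ?E - U \<Longrightarrow> g y = 1"
      using Cfam_separation[OF LC CR U x(1)] by blast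
    \<comment> \<open>The coordinate g cuts out a neighbourhood of p inside the image of U.\<close>
    let ?W = "{q \<in> topspace ?Y. q g \<in> {..<1}}"
    have "continuous_map ?Y euclideanreal (\<lambda>q. q g)"
      using continuous_map_cube_proj[of g H X] g(1)
      by (simp add: continuous_map_from_subtopology continuous_map_in_subtopology)
    then have "openin ?Y ?W"
      by (rule openin_continuous_map_preimage) simp
    moreover have "p \<in> ?W"
    proof -
      have "x \<in> ?E"
        using U x(1) openin_subset by blast
      then have "?f x \<in> topspace (cube X H)"
        using continuous_map_image_subset_topspace[OF continuous_map_Hmap_cube[OF H]] by blast
      with \<open>x \<in> ?E\<close> show ?thesis
        using g(1,2) by (simp add: x(2) Hmap_apply)
    qed
    moreover have "?W \<subseteq> ?f ` U"
    proof
      fix q assume "q \<in> ?W"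
      then obtain y where y: "y \<in> ?E" "q = ?f y" "?f y g < 1"
        by auto
      then have "y \<in> U"
        using g(1,3) by (force simp: Hmap_apply)
      then show "q \<in> ?f ` U"
        using y(2) by blast
    qed
    ultimately show "\<exists>W. openin ?Y W \<and> p \<in> W \<and> W \<subseteq> ?f ` U"
      by blast
  qed
qed

lemma embedding_map_Hmap:
  assumes "locally_compact_space X" "completely_regular_space X" "Hausdorff_space X" "H \<subseteq> Fam X le"
  shows "embedding_map X (Htop X H) (Hmap X H)"
proof -
  let ?f = "Hmap X H" and ?E = "topspace X"
  have "continuous_map X (subtopology (cube X H) (?f ` ?E)) ?f"
    using continuous_map_Hmap_cube[OF assms(4)] by (simp add: continuous_map_in_subtopology)
  then have "embedding_map X (cube X H) ?f"
    using injective_open_imp_embedding_map[OF _ open_map_Hmap[OF assms(1,2,4)] inj_on_Hmap[OF assms(1-3)]]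
      embedding_map_in_subtopology by blast
  moreover have "?f ` ?E \<subseteq> topspace (Htop X H)"
    using continuous_map_Hmap[OF assms(4)] continuous_map_image_subset_topspace by blast
  ultimately show ?thesis
    by (simp add: Htop_def embedding_map_in_subtopology topspace_Htop[unfolded Htop_def])
qed

lemma Htop_compactification:
  assumes "locally_compact_space X" "completely_regular_space X" "Hausdorff_space X"
    and "H \<subseteq> Fam X le" "determines X le H"
  shows "is_T2_compactification X le (Htop X H) (Hle H) (Hmap X H)"
  unfolding is_T2_compactification_def
  using compact_space_Htop Hausdorff_space_Htop preorder_on_space_Htop T2_preordered_Htop
    continuous_map_Hmap[OF assms(4)] embedding_map_Hmap[OF assms(1-4)] Hle_Hmap_iff[OF assms(5)] dense_Hmap
  by blast

section \<open>Isotone functions extending to a compactification\<close>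

lemma openin_compactification_image:
  assumes "locally_compact_space X" "is_T2_compactification X le K leK c"
  shows "openin K (c ` topspace X)"
proof -
  have "embedding_map X K c" "Hausdorff_space K" "K closure_of (c ` topspace X) = topspace K"
    "c ` topspace X \<subseteq> topspace K"
    using assms(2) continuous_map_image_subset_topspace unfolding is_T2_compactification_def by blast+
  moreover have "locally_compact_space (subtopology K (c ` topspace X))"
    using assms(1) embedding_map_imp_homeomorphic_space[OF \<open>embedding_map X K c\<close>]
      homeomorphic_locally_compact_space by blast
  ultimately show ?thesis
    using dense_locally_compact_openin_Hausdorff_space by blast
qed

lemma continuous_map_extend_outside_compact:
  assumes c: "embedding_map X K c" "openin K (c ` topspace X)" and "Hausdorff_space K"
    and g: "continuous_map X Y g" and C: "compactin X C" "r \<in> topspace Y"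
    and const: "\<And>x. x \<in> topspace X - C \<Longrightarrow> g x = r"
  obtains G where "continuous_map K Y G" "\<And>x. x \<in> topspace X \<Longrightarrow> G (c x) = g x"
proof -
  let ?E = "topspace X"
  obtain c' where "homeomorphic_maps X (subtopology K (c ` ?E)) c c'"
    using c(1) homeomorphic_map_maps unfolding embedding_map_def by blast
  then have c': "continuous_map (subtopology K (c ` ?E)) X c'" "\<And>x. x \<in> ?E \<Longrightarrow> c' (c x) = x"
    by (auto simp: homeomorphic_maps_def)
  have "closedin K (c ` C)"
    using C(1) c(1) \<open>Hausdorff_space K\<close> embedding_map_def homeomorphic_imp_continuous_map
      continuous_map_from_subtopology image_compactin compactin_imp_closedin
    by (metis continuous_map_in_subtopology)
  let ?T = "\<lambda>b. if b then c ` ?E else topspace K - c ` C"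
  let ?f = "\<lambda>b. if b then g \<circ> c' else (\<lambda>_. r)"
  obtain G where G: "continuous_map K Y G"
    "\<And>p b. \<lbrakk>b \<in> UNIV; p \<in> topspace K \<inter> ?T b\<rbrakk> \<Longrightarrow> G p = ?f b p"
  proof (rule pasting_lemma_exists[where I = UNIV and T = "?T" and f = "?f"])
    show "topspace K \<subseteq> (\<Union>b\<in>UNIV. ?T b)"
      using compactin_subset_topspace[OF C(1)] by auto
    show "openin K (?T b)" for b
      using c(2) \<open>closedin K (c ` C)\<close> by auto
    show "continuous_map (subtopology K (?T b)) Y (?f b)" for b
      using continuous_map_compose[OF c'(1) g] C(2) by auto
    show "?f b p = ?f b' p" if "p \<in> topspace K \<inter> ?T b \<inter> ?T b'" for b b' p
      using that c'(2) const by (cases b; cases b') (auto simp: image_iff)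
  qed auto
  show thesis
  proof (rule that[OF G(1)])
    fix x assume "x \<in> ?E"
    then show "G (c x) = g x"
      using G(2)[of True "c x"] c'(2) openin_subset[OF c(2)] by auto
  qed
qed

lemma Cfam_range: "g \<in> Cfam X \<Longrightarrow> x \<in> topspace X \<Longrightarrow> g x \<in> {0..1}"
  unfolding Cfam_def continuous_map_in_subtopology by blast

lemma Cfam_extension:
  assumes "locally_compact_space X" "is_T2_compactification X le K leK c" "g \<in> Cfam X"
  obtains G :: "'b \<Rightarrow> real"
  where "continuous_map K (top_of_set {0..1}) G" "\<And>x. x \<in> topspace X \<Longrightarrow> G (c x) = g x"
proof -
  obtain C r where C: "compactin X C" and r: "\<And>x. x \<in> topspace X - C \<Longrightarrow> g x = r"
    and g: "continuous_map X (top_of_set {0..1}) g"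
    using assms(3) unfolding Cfam_def by blast
  \<comment> \<open>When C covers X the constant r is arbitrary, possibly outside [0,1].\<close>
  define r' where "r' = (if topspace X \<subseteq> C then 0 else r)"
  have "r' \<in> topspace (top_of_set {0..1::real})"
    using Cfam_range[OF assms(3)] r by (auto simp: r'_def)
  moreover have "\<And>x. x \<in> topspace X - C \<Longrightarrow> g x = r'"
    using r by (auto simp: r'_def)
  moreover have "embedding_map X K c" "Hausdorff_space K"
    using assms(2) unfolding is_T2_compactification_def by blast+
  ultimately show thesis
    using continuous_map_extend_outside_compact[OF _ openin_compactification_image[OF assms(1,2)] _ g C]
      that by metis
qed

definition isotone_extendable ::
  "'a topology \<Rightarrow> ('a \<Rightarrow> 'a \<Rightarrow> bool) \<Rightarrow> 'b topology \<Rightarrow> ('b \<Rightarrow> 'b \<Rightarrow> bool) \<Rightarrow> ('a \<Rightarrow> 'b)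
     \<Rightarrow> ('a \<Rightarrow> real) set"
where
  "isotone_extendable X le K leK c = {f \<in> Fam X le. \<exists>F. continuous_map K (top_of_set {0..1}) F
       \<and> isotone_on K leK (\<le>) F \<and> (\<forall>x\<in>topspace X. F (c x) = f x)}"

lemma iH_eq_isotone_extendable: "iH X le H = isotone_extendable X le (Htop X H) (Hle H) (Hmap X H)"
  by (simp add: iH_def isotone_extendable_def)

lemma isotone_extendable_subset_Fam: "isotone_extendable X le K leK c \<subseteq> Fam X le"
  by (auto simp: isotone_extendable_def)

lemma isotone_extendable_antimono:
  assumes "dominates X K2 le2 c2 K1 le1 c1"
  shows "isotone_extendable X le K1 le1 c1 \<subseteq> isotone_extendable X le K2 le2 c2"
proof
  fix f assume "f \<in> isotone_extendable X le K1 le1 c1"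
  then obtain F where f: "f \<in> Fam X le" and F: "continuous_map K1 (top_of_set {0..1}) F"
    "isotone_on K1 le1 (\<le>) F" "\<forall>x\<in>topspace X. F (c1 x) = f x"
    unfolding isotone_extendable_def by blast
  obtain C where C: "continuous_map K2 K1 C" "isotone_on K2 le2 le1 C" "\<forall>x\<in>topspace X. C (c2 x) = c1 x"
    using assms unfolding dominates_def by blast
  have "continuous_map K2 (top_of_set {0..1}) (F \<circ> C)"
    using C(1) F(1) by (rule continuous_map_compose)
  moreover have "isotone_on K2 le2 (\<le>) (F \<circ> C)"
    using C(2) F(2) continuous_map_image_subset_topspace[OF C(1)]
    unfolding isotone_on_def by (simp add: image_subset_iff)
  moreover have "\<forall>x\<in>topspace X. (F \<circ> C) (c2 x) = f x"
    using C(3) F(3) by simp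
  ultimately show "f \<in> isotone_extendable X le K2 le2 c2"
    unfolding isotone_extendable_def using f by blast
qed

lemma isotone_extendable_subset_Ifam:
  assumes "H \<in> Ifam X le" "dominates X (Htop X H) (Hle H) (Hmap X H) K leK c"
  shows "isotone_extendable X le K leK c \<subseteq> H"
  using isotone_extendable_antimono[OF assms(2), of le] assms(1)
  by (simp add: Ifam_def flip: iH_eq_isotone_extendable)

lemma subset_iH:
  assumes "H \<subseteq> Fam X le"
  shows "H \<subseteq> iH X le H"
proof
  fix h assume h: "h \<in> H"
  have "continuous_map (Htop X H) (top_of_set {0..1}) (\<lambda>p. p h)"
    using h by (intro continuous_map_Htop_proj) blast
  moreover have "isotone_on (Htop X H) (Hle H) (\<le>) (\<lambda>p. p h)"
    using h by (auto simp: isotone_on_def Hle_def)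
  moreover have "\<forall>x\<in>topspace X. Hmap X H x h = h x"
    using h by (simp add: Hmap_apply)
  ultimately show "h \<in> iH X le H"
    unfolding iH_def using h assms by blast
qed

lemma compactification_extensions:
  assumes LC: "locally_compact_space X" and cpt: "is_T2_compactification X le K leK c"
    and H: "H \<subseteq> isotone_extendable X le K leK c"
  shows "\<exists>ext. \<forall>g\<in>H \<union> Cfam X. continuous_map K (top_of_set {0..1}) (ext g)
           \<and> (g \<in> H \<longrightarrow> isotone_on K leK (\<le>) (ext g)) \<and> (\<forall>x\<in>topspace X. ext g (c x) = g x)"
proof (rule bchoice, rule ballI)
  fix g assume g: "g \<in> H \<union> Cfam X"
  show "\<exists>F. continuous_map K (top_of_set {0..1}) F \<and> (g \<in> H \<longrightarrow> isotone_on K leK (\<le>) F)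
          \<and> (\<forall>x\<in>topspace X. F (c x) = g x)"
  proof (cases "g \<in> H")
    case True
    then show ?thesis
      using H unfolding isotone_extendable_def by blast
  next
    case False
    then have "g \<in> Cfam X"
      using g by blast
    then obtain G :: "'b \<Rightarrow> real"
      where "continuous_map K (top_of_set {0..1}) G" "\<And>x. x \<in> topspace X \<Longrightarrow> G (c x) = g x"
      using Cfam_extension[OF LC cpt] by blast
    then show ?thesis
      using False by blast
  qed
qed

lemma dominates_Htop:
  assumes LC: "locally_compact_space X" and cpt: "is_T2_compactification X le K leK c"
    and H: "H \<subseteq> isotone_extendable X le K leK c"
  shows "dominates X K leK c (Htop X H) (Hle H) (Hmap X H)"
proof -
  let ?E = "topspace X" and ?I = "H \<union> Cfam X"
  obtain ext where ext: "\<forall>g\<in>?I. continuous_map K (top_of_set {0..1}) (ext g)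
      \<and> (g \<in> H \<longrightarrow> isotone_on K leK (\<le>) (ext g)) \<and> (\<forall>x\<in>?E. ext g (c x) = g x)"
    using compactification_extensions[OF assms] by (rule exE)
  define \<Phi> where "\<Phi> p = restrict (\<lambda>g. ext g p) ?I" for p
  have cube: "continuous_map K (cube X H) \<Phi>"
    unfolding cube_def continuous_map_componentwise
  proof
    show "\<Phi> ` topspace K \<subseteq> extensional ?I"
      by (auto simp: \<Phi>_def)
    show "\<forall>g\<in>?I. continuous_map K (top_of_set {0..1}) (\<lambda>p. \<Phi> p g)"
      using ext by (simp add: \<Phi>_def)
  qed
  have \<Phi>_c: "\<Phi> (c x) = Hmap X H x" if "x \<in> ?E" for x
    unfolding \<Phi>_def Hmap_def using ext that by auto
  have "\<Phi> ` (K closure_of (c ` ?E)) \<subseteq> cube X H closure_of (\<Phi> ` c ` ?E)"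
    by (rule continuous_map_image_closure_subset[OF cube])
  moreover have "\<Phi> ` c ` ?E = Hmap X H ` ?E"
    using \<Phi>_c by (auto simp: image_iff)
  ultimately have "continuous_map K (Htop X H) \<Phi>"
    using cube cpt unfolding Htop_def is_T2_compactification_def
    by (simp add: continuous_map_in_subtopology image_subset_iff_funcset)
  moreover have "isotone_on K leK (Hle H) \<Phi>"
    using ext unfolding isotone_on_def Hle_def \<Phi>_def by auto
  ultimately show ?thesis
    unfolding dominates_def using \<Phi>_c by blast
qed

lemma isotone_extendable_compose:
  assumes cpt: "is_T2_compactification X le K leK c"
    and F: "continuous_map K (top_of_set {0..1}) F" "isotone_on K leK (\<le>) F"
  shows "restrict (F \<circ> c) (topspace X) \<in> isotone_extendable X le K leK c"
proof -
  have c: "continuous_map X K c"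
    and ord: "\<And>x y. x \<in> topspace X \<Longrightarrow> y \<in> topspace X \<Longrightarrow> le x y \<longleftrightarrow> leK (c x) (c y)"
    using cpt unfolding is_T2_compactification_def by blast+
  have "continuous_map X (top_of_set {0..1}) (restrict (F \<circ> c) (topspace X))"
    using continuous_map_compose[OF c F(1)] by (rule continuous_map_eq) simp
  moreover have "isotone_on X le (\<le>) (restrict (F \<circ> c) (topspace X))"
    using F(2) ord continuous_map_image_subset_topspace[OF c]
    unfolding isotone_on_def by (auto simp: image_subset_iff)
  ultimately show ?thesis
    unfolding isotone_extendable_def Fam_def using F by auto
qed

lemma determines_isotone_extendable:
  assumes cpt: "is_T2_compactification X le K leK c"
  shows "determines X le (isotone_extendable X le K leK c)"
proof -
  let ?E = "topspace X" and ?H = "isotone_extendable X le K leK c"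
  have K: "compact_space K" "Hausdorff_space K" "T2_preordered K leK" "preorder_on_space K leK"
    and c: "continuous_map X K c"
    and ord: "\<And>x y. x \<in> ?E \<Longrightarrow> y \<in> ?E \<Longrightarrow> le x y \<longleftrightarrow> leK (c x) (c y)"
    using cpt unfolding is_T2_compactification_def by blast+
  have "le x y" if "x \<in> ?E" "y \<in> ?E" "\<forall>h\<in>?H. h x \<le> h y" for x y
  proof (rule ccontr)
    assume "\<not> le x y"
    then have "c x \<in> topspace K" "c y \<in> topspace K" "\<not> leK (c x) (c y)"
      using that ord continuous_map_image_subset_topspace[OF c] by auto
    then obtain F :: "'b \<Rightarrow> real" where F: "continuous_map K (top_of_set {0..1}) F"
      "isotone_on K leK (\<le>) F" "F (c y) = 0" "F (c x) = 1"
      by (rule Nachbin_separation[OF K])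
    then have "restrict (F \<circ> c) ?E \<in> ?H"
      by (intro isotone_extendable_compose[OF cpt])
    then show False
      using that F(3,4) by force
  qed
  moreover have "h x \<le> h y" if "h \<in> ?H" "x \<in> ?E" "y \<in> ?E" "le x y" for h x y
    using that unfolding isotone_extendable_def Fam_def isotone_on_def by blast
  ultimately show ?thesis
    unfolding determines_def graph_of_def graph_fun_def by auto
qed

theorem mainTheorem17:
  fixes T :: "'a topology" and le :: "'a \<Rightarrow> 'a \<Rightarrow> bool"
    and K0 :: "'b topology" and le0 :: "'b \<Rightarrow> 'b \<Rightarrow> bool" and c0 :: "'a \<Rightarrow> 'b"
  assumes "locally_compact_space T"
    and "completely_regular_space T" and "Hausdorff_space T"
    and "preorder_on_space T le" and "T2_preordered T le"
    and "determines T le (Fam T le)"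
    and smallest: "is_T2_compactification T le K0 le0 c0"
    and "\<forall>(K :: (('a \<Rightarrow> real) \<Rightarrow> real) topology) leK c.
           is_T2_compactification T le K leK c \<longrightarrow> dominates T K leK c K0 le0 c0"
  shows "determines T le (\<Inter>(Ifam T le)) \<and>
         iH T le (\<Inter>(Ifam T le)) = \<Inter>(Ifam T le) \<and>
         equivalent_compactifications T K0 le0 c0
           (Htop T (\<Inter>(Ifam T le))) (Hle (\<Inter>(Ifam T le))) (Hmap T (\<Inter>(Ifam T le)))"
proof -
  note LC = assms(1) and CR = assms(2) and HT = assms(3) and smallest_dominated = assms(8)
  define S where "S = isotone_extendable T le K0 le0 c0"
  have SF: "S \<subseteq> Fam T le" and SD: "determines T le S"
    unfolding S_def by (rule isotone_extendable_subset_Fam, rule determines_isotone_extendable[OF smallest])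
  have D0: "dominates T K0 le0 c0 (Htop T S) (Hle S) (Hmap T S)"
    by (rule dominates_Htop[OF LC smallest]) (simp add: S_def)
  have D1: "dominates T (Htop T S) (Hle S) (Hmap T S) K0 le0 c0"
    using Htop_compactification[OF LC CR HT SF SD] smallest_dominated by blast
  have iS: "iH T le S = S"
    using subset_iH[OF SF] isotone_extendable_antimono[OF D0]
    by (auto simp: iH_eq_isotone_extendable S_def)
  have "S \<subseteq> H" if H: "H \<in> Ifam T le" for H
  proof -
    have "is_T2_compactification T le (Htop T H) (Hle H) (Hmap T H)"
      using H Htop_compactification[OF LC CR HT] by (auto simp: Ifam_def)
    then show ?thesis
      unfolding S_def using smallest_dominated by (intro isotone_extendable_subset_Ifam[OF H]) blast
  qed
  moreover have "S \<in> Ifam T le"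
    using SF SD iS by (simp add: Ifam_def)
  ultimately have "\<Inter>(Ifam T le) = S"
    by blast
  then show ?thesis
    using SD iS D0 D1 unfolding equivalent_compactifications_def by simp
qed

end
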